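(* Let $q$ be a power of an odd prime, $c\in\mathbb{F}_q^*$, and $f(X)=c(X^{q+1}-X^2)$ on $\mathbb{F}_{q^2}$. If $\alpha\in\mathbb{F}_{q^2}\setminus\mathbb{F}_q$, then the number of $\gamma\in\mathbb{F}_{q^2}$ with $f(\gamma)=\alpha$ is either $0$ or $2$. *)

theory Defs
  imports "HOL-Computational_Algebra.Primes" "HOL-Library.Cardinality"
begin

text \<open>The subfield F_q of a finite field of order q^2: the fixed points of the
  q-Frobenius map x \<mapsto> x^q.\<close>
definition base_subfield :: "nat \<Rightarrow> 'a::field set" where
  "base_subfield q = {x. x ^ q = x}"

end

theory Submission
  imports Defs "HOL-Number_Theory.Residues"
begin

(* Dividing by c reduces the equation to \<gamma>^(q+1) - \<gamma>^2 = \<beta> with \<beta> = \<alpha>/c outside F_q.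
   The norm n = \<gamma>^(q+1) lies in F_q and \<gamma>^2 = n - \<beta>; taking norms of this gives
   n^2 = (n - \<beta>)(n - \<beta>^q), in which the n^2 terms cancel, so n (\<beta> + \<beta>^q) = \<beta>^(q+1)
   determines n (and \<beta> + \<beta>^q = 0 would force \<beta> = 0). Hence all solutions have the same
   nonzero square; since q + 1 is even, the solutions are either none or some \<gamma> and -\<gamma>,
   which differ in odd characteristic. *)

definition nonzero_mult_group :: "'a :: field monoid" where
  "nonzero_mult_group = \<lparr>carrier = - {0}, mult = (*), one = 1\<rparr>"

lemma group_nonzero_mult_group: "group (nonzero_mult_group :: 'a :: field monoid)"
proof (rule groupI)
  fix x :: 'a
  assume "x \<in> carrier nonzero_mult_group"
  then show "\<exists>y\<in>carrier nonzero_mult_group.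
      y \<otimes>\<^bsub>nonzero_mult_group\<^esub> x = \<one>\<^bsub>nonzero_mult_group\<^esub>"
    by (intro bexI[of _ "inverse x"]) (auto simp: nonzero_mult_group_def)
qed (auto simp: nonzero_mult_group_def mult.assoc)

lemma nat_pow_nonzero_mult_group: "x [^]\<^bsub>nonzero_mult_group\<^esub> n = (x :: 'a :: field) ^ n"
  by (induction n) (simp_all add: nonzero_mult_group_def power_commutes)

lemma finite_field_power_card_eq_self:
  fixes x :: "'a :: {field, finite}"
  shows "x ^ CARD('a) = x"
proof (cases "x = 0")
  case False
  have "- {0 :: 'a} = UNIV - {0}"
    by blast
  then have order: "order (nonzero_mult_group :: 'a monoid) = CARD('a) - 1"
    by (simp add: order_def nonzero_mult_group_def card_Diff_singleton)
  have "x ^ (CARD('a) - 1) = 1"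
    using group.pow_order_eq_1[OF group_nonzero_mult_group, of x] False
    by (simp add: order nat_pow_nonzero_mult_group) (simp add: nonzero_mult_group_def)
  moreover have "CARD('a) = Suc (CARD('a) - 1)"
    using finite_UNIV_card_ge_0[where ?'a = 'a] by simp
  ultimately show ?thesis
    by (metis power_Suc mult_1_right)
qed (simp add: finite_UNIV_card_ge_0)

lemma CHAR_eq_if_card_eq_prime_power:
  assumes "prime p" and "CARD('a :: {field, finite}) = p ^ n"
  shows "CHAR('a) = p"
proof -
  have "prime CHAR('a)"
    by (rule prime_CHAR_semidom) (simp add: finite_imp_CHAR_pos)
  moreover have "CHAR('a) dvd p ^ n"
    using CHAR_dvd_CARD[where 'a = 'a] assms(2) by simp
  ultimately show ?thesis
    using assms(1) by (metis prime_dvd_power primes_dvd_imp_eq)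
qed

lemma two_neq_zero_if_odd_CHAR:
  assumes "odd CHAR('a :: semiring_1)"
  shows "(2 :: 'a) \<noteq> 0"
proof
  assume "(2 :: 'a) = 0"
  then have "CHAR('a) dvd 2"
    by (metis of_nat_eq_0_iff_char_dvd of_nat_numeral)
  then have "CHAR('a) = 1 \<or> CHAR('a) = 2"
    using prime_nat_iff two_is_prime_nat by blast
  then show False
    using assms by auto
qed

lemma card_eq_0_or_2_if_same_square:
  fixes S :: "'a :: field set"
  assumes "(2 :: 'a) \<noteq> 0" and "0 \<notin> S" and "\<And>x. x \<in> S \<Longrightarrow> - x \<in> S"
    and "\<And>x y. x \<in> S \<Longrightarrow> y \<in> S \<Longrightarrow> x ^ 2 = y ^ 2"
  shows "card S \<in> {0, 2}"
proof (cases "S = {}")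
  case False
  then obtain g where g: "g \<in> S" by blast
  have "S = {g, - g}"
    using g assms(3,4) by (auto simp: power2_eq_iff)
  moreover have "g \<noteq> - g"
    using g assms(1,2) by (metis add_eq_0_iff mult_2 mult_eq_0_iff)
  ultimately show ?thesis by simp
qed simp

lemma square_eq_if_norm_minus_square_eq:
  fixes \<beta> \<gamma> :: "'a :: field"
  assumes frob_add: "\<And>x y :: 'a. (x + y) ^ q = x ^ q + y ^ q"
    and frob_invol: "\<And>x :: 'a. x ^ (q * q) = x"
    and \<beta>: "\<beta> \<notin> base_subfield q" and \<gamma>: "\<gamma> ^ (q + 1) - \<gamma> ^ 2 = \<beta>"
  shows "\<gamma> ^ 2 = \<beta> ^ (q + 1) / (\<beta> + \<beta> ^ q) - \<beta>"
proof -
  define n where "n = \<gamma> ^ (q + 1)"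
  have n_fixed: "n \<in> base_subfield q"
  proof -
    have "n ^ q = \<gamma> ^ ((q + 1) * q)"
      by (simp only: n_def power_mult)
    also have "(q + 1) * q = q * q + q"
      by simp
    also have "\<gamma> ^ (q * q + q) = \<gamma> ^ (q * q) * \<gamma> ^ q"
      by (rule power_add)
    also have "\<dots> = n"
      unfolding frob_invol by (simp add: n_def)
    finally show ?thesis
      by (simp add: base_subfield_def)
  qed
  have square: "\<gamma> ^ 2 = n - \<beta>"
    using \<gamma> by (simp add: n_def algebra_simps)
  have "n ^ q = (n - \<beta>) ^ q + \<beta> ^ q"
    using frob_add[of "n - \<beta>" \<beta>] by simp
  then have conj: "(n - \<beta>) ^ q = n - \<beta> ^ q"
    using n_fixed by (simp add: base_subfield_def algebra_simps)
  have "n ^ 2 = (\<gamma> ^ 2) ^ (q + 1)"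
    by (metis n_def power_mult mult.commute)
  also have "\<dots> = (n - \<beta>) * (n - \<beta> ^ q)"
    using square conj by simp
  finally have linear: "n * (\<beta> + \<beta> ^ q) = \<beta> ^ (q + 1)"
    by (simp add: algebra_simps power2_eq_square)
  have "q \<noteq> 0"
    using frob_invol[of 0] by auto
  have "\<beta> + \<beta> ^ q \<noteq> 0"
  proof
    assume "\<beta> + \<beta> ^ q = 0"
    then have "\<beta> ^ (q + 1) = 0"
      using linear by simp
    then have "\<beta> = 0"
      by auto
    then show False
      using \<beta> \<open>q \<noteq> 0\<close> by (simp add: base_subfield_def)
  qed
  then have "n = \<beta> ^ (q + 1) / (\<beta> + \<beta> ^ q)"
    using linear by (simp add: eq_divide_eq)
  then show ?thesis
    using square by simp
qed

lemma card_norm_minus_square_eq: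
  fixes \<beta> :: "'a :: field"
  assumes frob_add: "\<And>x y :: 'a. (x + y) ^ q = x ^ q + y ^ q"
    and frob_invol: "\<And>x :: 'a. x ^ (q * q) = x"
    and "odd q" and "(2 :: 'a) \<noteq> 0" and \<beta>: "\<beta> \<notin> base_subfield q"
  shows "card {\<gamma>. \<gamma> ^ (q + 1) - \<gamma> ^ 2 = \<beta>} \<in> {0, 2}"
proof (rule card_eq_0_or_2_if_same_square)
  show "0 \<notin> {\<gamma>. \<gamma> ^ (q + 1) - \<gamma> ^ 2 = \<beta>}"
    using \<open>odd q\<close> \<beta> by (auto simp: base_subfield_def power2_eq_square)
  show "- x \<in> {\<gamma>. \<gamma> ^ (q + 1) - \<gamma> ^ 2 = \<beta>}" if "x \<in> {\<gamma>. \<gamma> ^ (q + 1) - \<gamma> ^ 2 = \<beta>}" for x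
    using that \<open>odd q\<close> by simp
  show "x ^ 2 = y ^ 2"
    if "x \<in> {\<gamma>. \<gamma> ^ (q + 1) - \<gamma> ^ 2 = \<beta>}" and "y \<in> {\<gamma>. \<gamma> ^ (q + 1) - \<gamma> ^ 2 = \<beta>}" for x y
    using that square_eq_if_norm_minus_square_eq[OF frob_add frob_invol \<beta>, of x]
      square_eq_if_norm_minus_square_eq[OF frob_add frob_invol \<beta>, of y]
    by simp
qed fact

theorem lemma5:
  fixes p k q :: nat and c \<alpha> :: "'a::{field,finite}"
  assumes "prime p" and "odd p" and "k \<ge> 1" and "q = p ^ k"
    and "CARD('a) = q ^ 2"
    and "c \<in> base_subfield q" and "c \<noteq> 0"
    and "\<alpha> \<notin> base_subfield q"
  shows "card {\<gamma>::'a. c * (\<gamma> ^ (q + 1) - \<gamma> ^ 2) = \<alpha>} \<in> {0, 2}"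
proof -
  have char: "CHAR('a) = p"
    using CHAR_eq_if_card_eq_prime_power[OF \<open>prime p\<close>] assms(4,5) by (simp add: power_mult[symmetric])
  have frob_add: "(x + y) ^ q = x ^ q + y ^ q" for x y :: 'a
    using freshmans_dream' char assms(1,4) by blast
  have frob_invol: "x ^ (q * q) = x" for x :: 'a
    using finite_field_power_card_eq_self[of x] assms(5) by (simp add: power2_eq_square)
  have "(2 :: 'a) \<noteq> 0"
    by (rule two_neq_zero_if_odd_CHAR) (simp add: char \<open>odd p\<close>)
  define \<beta> where "\<beta> = \<alpha> / c"
  have \<alpha>: "\<alpha> = c * \<beta>"
    using \<open>c \<noteq> 0\<close> by (simp add: \<beta>_def)
  have "\<beta> \<notin> base_subfield q"
    using assms(6,8) \<open>c \<noteq> 0\<close> by (auto simp: base_subfield_def \<alpha> power_mult_distrib)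
  have "odd q"
    using assms(2,4) by simp
  have "{\<gamma>::'a. c * (\<gamma> ^ (q + 1) - \<gamma> ^ 2) = \<alpha>} = {\<gamma>. \<gamma> ^ (q + 1) - \<gamma> ^ 2 = \<beta>}"
    using \<open>c \<noteq> 0\<close> by (auto simp: \<alpha>)
  then show ?thesis
    using card_norm_minus_square_eq[OF frob_add frob_invol \<open>odd q\<close> \<open>(2 :: 'a) \<noteq> 0\<close> \<open>\<beta> \<notin> base_subfield q\<close>]
    by simp
qed

end
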